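(* Under the standing setup, let $c>0$ be a constant such that $|\mathcal{F}(\mu)(4\pi\overline{\theta^{N}})|>c$ for all $N\in\mathbb{N}$. For $n\ge1$ let \[ U_{n}=\Big\{z\in S\::\:\sup_{r\ge n}|\mathcal{F}(P_{z}\mu)(r)|>c\Big\}. \] Then for every $n\ge1$, $U_n$ is an open and dense subset of $S$.
   Context: Standing setup: Identify $\mathbb{R}^2$ with $\mathbb{C}$. Let $\theta\in\mathbb{C}$ be a complex Pisot number (an algebraic integer with $\theta\notin\mathbb{R}$, $|\theta|>1$, and all Galois conjugates of $\theta$ other than $\overline{\theta}$ of modulus $<1$) such that $\arg\theta\notin\pi\mathbb{Q}$, $3<|\theta|<4$, and the minimal polynomial of $\theta$ over $\mathbb{Q}$ has constant term $1$ or $-1$. Set $\lambda=\theta^{-1}$ and $\mathcal{Y}=\{k\lambda^{l}:k,l\in\mathbb{N}\}$. Let $a_1,a_2\in\mathcal{Y}$ be such that the IFS $\Phi=\{\varphi_{k,j}(z)=\lambda z+(-1)^k a_j : k,j\in\{1,2\}\}$ satisfies the strong separation condition (the images of its attractor under the four maps are pairwise disjoint). Let $\mu$ be the unique compactly supported Borel probability measure on $\mathbb{C}$ with $\mu=\frac14\sum_{k,j\in\{1,2\}}\varphi_{k,j}\mu$ (pushforwards). Write $S=\{z\in\mathbb{C}:|z|=1\}$, $\langle z,w\rangle=\mathrm{Re}(z\overline{w})$, and $P_zw=\langle w,z\rangle$ for $z\in S$, $w\in\mathbb{C}$. For a measure $\nu$ on $\mathbb{C}$, $\mathcal{F}(\nu)(\xi)=\int\exp(i\,\mathrm{Re}(z\overline{\xi}))\,d\nu(z)$;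 for a compactly supported probability measure $\nu$ on $\mathbb{R}$, $\mathcal{F}(\nu)(r)=\int e^{ixr}\,d\nu(x)$. *)

theory Defs
  imports "HOL-Probability.Probability" "HOL-Computational_Algebra.Polynomial" "HOL-Computational_Algebra.Factorial_Ring"
begin

text \<open>The minimal polynomial
  of an algebraic integer over Q is the unique monic polynomial in Z[x] that is irreducible
  and vanishes at theta; its complex roots are the Galois conjugates.\<close>
definition min_poly_of :: "complex \<Rightarrow> int poly \<Rightarrow> bool" where
  "min_poly_of \<theta> p \<longleftrightarrow> lead_coeff p = 1 \<and> irreducible p \<and> poly (map_poly of_int p) \<theta> = 0"

definition complex_pisot :: "complex \<Rightarrow> bool" where
  "complex_pisot \<theta> \<longleftrightarrow> \<theta> \<notin> \<real> \<and> norm \<theta> > 1 \<and>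
     (\<exists>p. min_poly_of \<theta> p \<and>
        (\<forall>w. poly (map_poly of_int p) w = 0 \<longrightarrow> w \<noteq> \<theta> \<longrightarrow> w \<noteq> cnj \<theta> \<longrightarrow> norm w < 1))"

definition standing_theta :: "complex \<Rightarrow> bool" where
  "standing_theta \<theta> \<longleftrightarrow> complex_pisot \<theta> \<and> Arg \<theta> / pi \<notin> \<rat> \<and> 3 < norm \<theta> \<and> norm \<theta> < 4 \<and>
     (\<exists>p. min_poly_of \<theta> p \<and> (coeff p 0 = 1 \<or> coeff p 0 = -1))"

definition Yset :: "complex \<Rightarrow> complex set" where
  "Yset lam = {of_nat k * lam ^ l | k l. k \<ge> 1 \<and> l \<ge> 1}"

definition ifs_map :: "complex \<Rightarrow> complex \<Rightarrow> complex \<Rightarrow> nat \<Rightarrow> nat \<Rightarrow> complex \<Rightarrow> complex" where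
  "ifs_map lam a1 a2 k j z = lam * z + (-1) ^ k * (if j = 1 then a1 else a2)"

definition ifs_index :: "(nat \<times> nat) set" where
  "ifs_index = {1,2} \<times> {1,2}"

definition is_attractor :: "complex \<Rightarrow> complex \<Rightarrow> complex \<Rightarrow> complex set \<Rightarrow> bool" where
  "is_attractor lam a1 a2 K \<longleftrightarrow> K \<noteq> {} \<and> compact K \<and>
     K = (\<Union>(k,j)\<in>ifs_index. ifs_map lam a1 a2 k j ` K)"

definition strong_separation :: "complex \<Rightarrow> complex \<Rightarrow> complex \<Rightarrow> bool" where
  "strong_separation lam a1 a2 \<longleftrightarrow> (\<exists>K. is_attractor lam a1 a2 K \<and>
     (\<forall>i\<in>ifs_index. \<forall>i'\<in>ifs_index. i \<noteq> i' \<longrightarrow>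
        ifs_map lam a1 a2 (fst i) (snd i) ` K \<inter> ifs_map lam a1 a2 (fst i') (snd i') ` K = {}))"

definition self_similar_measure :: "complex \<Rightarrow> complex \<Rightarrow> complex \<Rightarrow> complex measure \<Rightarrow> bool" where
  "self_similar_measure lam a1 a2 \<mu> \<longleftrightarrow> prob_space \<mu> \<and> sets \<mu> = sets borel \<and>
     (\<exists>C. compact C \<and> emeasure \<mu> (space \<mu> - C) = 0) \<and>
     (\<forall>A\<in>sets borel. measure \<mu> A =
        (1/4) * (\<Sum>(k,j)\<in>ifs_index. measure \<mu> (ifs_map lam a1 a2 k j -` A)))"

definition fourier_C :: "complex measure \<Rightarrow> complex \<Rightarrow> complex" where
  "fourier_C \<nu> \<xi> = (LINT z|\<nu>. exp (\<i> * complex_of_real (Re (z * cnj \<xi>))))"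

definition fourier_R :: "real measure \<Rightarrow> real \<Rightarrow> complex" where
  "fourier_R \<nu> r = (LINT x|\<nu>. exp (\<i> * complex_of_real (x * r)))"

definition proj :: "complex \<Rightarrow> complex \<Rightarrow> real" where
  "proj z w = Re (w * cnj z)"

definition proj_measure :: "complex \<Rightarrow> complex measure \<Rightarrow> real measure" where
  "proj_measure z \<mu> = distr \<mu> borel (proj z)"

definition unit_circle :: "complex set" where
  "unit_circle = {z. norm z = 1}"

definition U_set :: "complex measure \<Rightarrow> real \<Rightarrow> nat \<Rightarrow> complex set" where
  "U_set \<mu> c n = {z \<in> unit_circle. (SUP r\<in>{real n..}. norm (fourier_R (proj_measure z \<mu>) r)) > c}"

end

theory Submission
  imports Defs "HOL-Analysis.Kronecker_Approximation_Theorem"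
begin

text \<open>Since the Fourier transform of a projection is a restriction of the planar one,
  \<open>\<F>(P\<^sub>z\<mu>)(r) = \<F>(\<mu>)(r z)\<close>, the set \<open>U\<^sub>n\<close> is the union over \<open>r \<ge> n\<close> of the sets
  \<open>{z \<in> S. |\<F>(\<mu>)(r z)| > c}\<close>, which are relatively open because \<open>\<F>(\<mu>)\<close> is continuous.
  For density, \<open>4\<pi> cnj(\<theta>\<^sup>N)\<close> lies on the ray through \<open>cis(-N arg \<theta>)\<close> at distance
  \<open>4\<pi>|\<theta>|\<^sup>N \<rightarrow> \<infinity>\<close>, so for all large \<open>N\<close> the direction \<open>cis(-N arg \<theta>)\<close> lies in \<open>U\<^sub>n\<close>; as
  \<open>arg \<theta>/\<pi>\<close> is irrational, these directions are dense in \<open>S\<close> by Kronecker's theorem.\<close>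

lemma isCont_fourier_C:
  assumes "prob_space M" "sets M = sets borel"
  shows "isCont (fourier_C M) \<xi>"
  unfolding continuous_at_sequentially
proof safe
  interpret prob_space M by fact
  fix X assume X: "X \<longlonglongrightarrow> \<xi>"
  have meas: "(\<lambda>z::complex. exp (\<i> * complex_of_real (Re (z * cnj y)))) \<in> borel_measurable M" for y
    using assms(2) measurable_cong_sets
    by (auto intro!: borel_measurable_continuous_onI continuous_intros)
  show "(fourier_C M \<circ> X) \<longlonglongrightarrow> fourier_C M \<xi>"
    unfolding comp_def fourier_C_def
    by (rule integral_dominated_convergence[where w="\<lambda>_. 1", OF meas meas])
       (auto intro!: tendsto_intros X simp: norm_exp_i_times)
qed

lemma norm_fourier_C_le_1:
  assumes "prob_space M"
  shows "norm (fourier_C M \<xi>) \<le> 1"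
proof -
  interpret prob_space M by fact
  have "norm (fourier_C M \<xi>) \<le> (\<integral>x. norm (exp (\<i> * complex_of_real (Re (x * cnj \<xi>)))) \<partial>M)"
    unfolding fourier_C_def by (rule integral_norm_bound)
  also have "\<dots> \<le> 1" by (simp add: norm_exp_i_times)
  finally show ?thesis .
qed

lemma fourier_R_proj_measure:
  assumes "sets M = sets borel"
  shows "fourier_R (proj_measure z M) r = fourier_C M (of_real r * z)"
proof -
  have "proj z \<in> measurable M borel"
    unfolding proj_def using assms measurable_cong_sets
    by (auto intro!: borel_measurable_continuous_onI continuous_intros)
  then have "fourier_R (proj_measure z M) r = (LINT w|M. exp (\<i> * complex_of_real (proj z w * r)))"
    unfolding fourier_R_def proj_measure_def
    by (rule integral_distr) (auto intro!: borel_measurable_continuous_onI continuous_intros)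
  also have "\<dots> = fourier_C M (of_real r * z)"
    unfolding fourier_C_def proj_def by (simp add: algebra_simps)
  finally show ?thesis .
qed

lemma U_set_eq:
  assumes "prob_space M" "sets M = sets borel"
  shows "U_set M c n = {z \<in> unit_circle. \<exists>r\<ge>real n. c < norm (fourier_C M (of_real r * z))}"
proof -
  have "c < (SUP r\<in>{real n..}. norm (fourier_R (proj_measure z M) r))
          \<longleftrightarrow> (\<exists>r\<ge>real n. c < norm (fourier_C M (of_real r * z)))" for z
  proof -
    have "bdd_above ((\<lambda>r. norm (fourier_C M (of_real r * z))) ` {real n..})"
      using norm_fourier_C_le_1[OF assms(1)] by (intro bdd_aboveI[where M=1]) auto
    then show ?thesis
      by (simp add: fourier_R_proj_measure[OF assms(2)] less_cSUP_iff Bex_def)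
  qed
  then show ?thesis
    unfolding U_set_def by auto
qed

lemma openin_U_set:
  assumes "prob_space M" "sets M = sets borel"
  shows "openin (top_of_set unit_circle) (U_set M c n)"
proof -
  have "U_set M c n = unit_circle \<inter> (\<Union>r\<in>{real n..}. {z. c < norm (fourier_C M (of_real r * z))})"
    by (auto simp: U_set_eq[OF assms])
  moreover have "continuous_on UNIV (\<lambda>z. norm (fourier_C M (of_real r * z)))" for r
    by (intro continuous_at_imp_continuous_on ballI continuous_intros
          isCont_o2[OF _ isCont_fourier_C[OF assms]])
  then have "open (\<Union>r\<in>{real n..}. {z. c < norm (fourier_C M (of_real r * z))})"
    by (intro open_UN ballI open_Collect_less continuous_on_const)
  ultimately show ?thesis
    by (simp add: openin_open_Int)
qed

lemma dist_cis_le: "dist (cis x) (cis y) \<le> \<bar>x - y\<bar>"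
proof -
  have "cis x - cis y = cis y * (exp (\<i> * of_real (x - y)) - 1)"
    by (simp add: cis_conv_exp algebra_simps flip: exp_add)
  then have "dist (cis x) (cis y) = cmod (exp (\<i> * of_real (x - y)) - 1)"
    by (simp add: dist_norm norm_mult)
  also have "\<dots> \<le> \<bar>x - y\<bar>"
    using iexp_approx1[of "x - y" 0] by simp
  finally show ?thesis .
qed

lemma cis_multiples_dense:
  fixes \<alpha> :: real and z :: complex
  assumes irrational: "\<alpha> / pi \<notin> \<rat>" and "norm z = 1" and "e > 0"
  obtains N :: nat where "N \<ge> n" "dist (cis (real N * \<alpha>)) z < e"
proof -
  define t where "t = \<alpha> / (2 * pi)"
  have "t \<notin> \<rat>"
  proof
    assume "t \<in> \<rat>"
    then have "2 * t \<in> \<rat>" by simp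
    with irrational show False unfolding t_def by simp
  qed
  moreover have "e / (2 * pi) > 0"
    using \<open>e > 0\<close> by simp
  ultimately obtain h k where "k > 0"
    and approx: "\<bar>of_int k * t - of_int h - (Arg z / (2 * pi) - real n * t)\<bar> < e / (2 * pi)"
    by (rule sequence_of_fractional_parts_is_dense)
  define N where "N = nat k + n"
  have N: "real N = of_int k + real n"
    using \<open>k > 0\<close> unfolding N_def by simp
  have "real N * \<alpha> - 2 * pi * of_int h - Arg z
          = 2 * pi * (of_int k * t - of_int h - (Arg z / (2 * pi) - real n * t))"
    unfolding N t_def by (simp add: field_simps)
  then have "\<bar>real N * \<alpha> - 2 * pi * of_int h - Arg z\<bar>
          = 2 * pi * \<bar>of_int k * t - of_int h - (Arg z / (2 * pi) - real n * t)\<bar>"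
    by (simp add: abs_mult)
  with approx have close: "\<bar>real N * \<alpha> - 2 * pi * of_int h - Arg z\<bar> < e"
    by (simp add: pos_less_divide_eq mult.commute)
  have "cis (real N * \<alpha>) = cis (real N * \<alpha> - 2 * pi * of_int h)"
    by (simp flip: cis_divide)
  moreover have "cis (Arg z) = z"
    using \<open>norm z = 1\<close> cis_Arg[of z] by (cases "z = 0") (auto simp: sgn_div_norm)
  ultimately have "dist (cis (real N * \<alpha>)) z \<le> \<bar>real N * \<alpha> - 2 * pi * of_int h - Arg z\<bar>"
    using dist_cis_le[of "real N * \<alpha> - 2 * pi * of_int h" "Arg z"] by simp
  with close have "dist (cis (real N * \<alpha>)) z < e" by simp
  moreover have "N \<ge> n" unfolding N_def by simp
  ultimately show ?thesis using that by blast
qed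

lemma cnj_power_polar: "cnj (\<theta> ^ N) = of_real (norm \<theta> ^ N) * cis (real N * - Arg \<theta>)"
proof -
  have "cnj (\<theta> ^ N) = rcis (norm \<theta>) (- Arg \<theta>) ^ N"
    by (simp flip: rcis_cnj)
  also have "\<dots> = rcis (norm \<theta> ^ N) (real N * - Arg \<theta>)"
    by (rule DeMoivre2)
  finally show ?thesis
    by (simp add: rcis_def)
qed

lemma unit_circle_subset_closure_U_set:
  assumes "prob_space M" "sets M = sets borel"
    and "1 < norm \<theta>" and irrational: "Arg \<theta> / pi \<notin> \<rat>"
    and large: "\<forall>N\<ge>1. c < norm (fourier_C M (4 * pi * cnj (\<theta> ^ N)))"
  shows "unit_circle \<subseteq> closure (U_set M c n)"
  unfolding subset_eq closure_approachable
proof (intro ballI allI impI)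
  fix z and e :: real
  assume "z \<in> unit_circle" "e > 0"
  obtain m where m: "real n < norm \<theta> ^ m"
    using real_arch_pow[OF \<open>1 < norm \<theta>\<close>] by blast
  have "- Arg \<theta> / pi \<notin> \<rat>"
    using irrational by simp
  then obtain N where "N \<ge> Suc m" and close: "dist (cis (real N * - Arg \<theta>)) z < e"
    using cis_multiples_dense[of "- Arg \<theta>" z e "Suc m"] \<open>z \<in> unit_circle\<close> \<open>e > 0\<close>
    unfolding unit_circle_def by auto
  define w where "w = cis (real N * - Arg \<theta>)"
  define r where "r = 4 * pi * norm \<theta> ^ N"
  have "norm \<theta> ^ m \<le> norm \<theta> ^ N"
    using \<open>N \<ge> Suc m\<close> \<open>1 < norm \<theta>\<close> by (intro power_increasing) auto
  also have "\<dots> \<le> r"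
    unfolding r_def using pi_gt3 by (simp add: mult_le_cancel_right1)
  finally have "real n \<le> r"
    using m by linarith
  moreover have "of_real r * w = 4 * pi * cnj (\<theta> ^ N)"
    unfolding r_def w_def cnj_power_polar by simp
  then have "c < norm (fourier_C M (of_real r * w))"
    using large \<open>N \<ge> Suc m\<close> by simp
  moreover have "w \<in> unit_circle"
    unfolding w_def unit_circle_def by simp
  ultimately have "w \<in> U_set M c n"
    unfolding U_set_eq[OF assms(1,2)] by blast
  with close[folded w_def] show "\<exists>y\<in>U_set M c n. dist y z < e"
    by blast
qed

theorem lemma3p3:
  fixes \<theta> lam a1 a2 :: complex and \<mu> :: "complex measure" and c :: real
  assumes "standing_theta \<theta>"
    and "lam = inverse \<theta>"
    and "a1 \<in> Yset lam" and "a2 \<in> Yset lam"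
    and "strong_separation lam a1 a2"
    and "self_similar_measure lam a1 a2 \<mu>"
    and "c > 0"
    and "\<forall>N::nat. N \<ge> 1 \<longrightarrow> norm (fourier_C \<mu> (4 * pi * cnj (\<theta> ^ N))) > c"
  shows "\<forall>n::nat. n \<ge> 1 \<longrightarrow>
           openin (top_of_set unit_circle) (U_set \<mu> c n) \<and> unit_circle \<subseteq> closure (U_set \<mu> c n)"
proof -
  have prob: "prob_space \<mu>" and borel: "sets \<mu> = sets borel"
    using assms(6) unfolding self_similar_measure_def by auto
  have "1 < norm \<theta>" and "Arg \<theta> / pi \<notin> \<rat>"
    using assms(1) unfolding standing_theta_def by auto
  then show ?thesis
    using openin_U_set[OF prob borel] unit_circle_subset_closure_U_set[OF prob borel] assms(8)
    by blast
qed

end
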